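(* Let $d \ge 1$, let $\mathcal{V}^s$ be a finite nonempty set (the source vocabulary) with embeddings $e_k^s \in \mathbb{R}^d$ for $k \in \mathcal{V}^s$, and let $\mathcal{V}^t$ be a finite set disjoint from $\mathcal{V}^s$ (the added target vocabulary) with embeddings $e_k^t \in \mathbb{R}^d$ for $k \in \mathcal{V}^t$. Suppose that $$\sup_{k \in \mathcal{V}^t} h^{\top} e_k^t \;\le\; \sup_{k \in \mathcal{V}^s} h^{\top} e_k^s \qquad \text{for all } h \in \mathbb{R}^d.$$ Then $\{e_k^t : k \in \mathcal{V}^t\}$ is a good initialization, i.e. for every prefix representation $h \in H$, the greedily decoded next word of the expanded model equals that of the source model: $\operatorname{argmax}_{j \in \mathcal{V}^s} p^s(j \mid h) = \operatorname{argmax}_{j \in \mathcal{V}^s \cup \mathcal{V}^t} p^t(j \mid h)$.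
   Context: Setting: a language model maps a prefix (sequence of words) to a representation $h \in \mathbb{R}^d$ via a fixed map $\phi$ whose parameters are unchanged by vocabulary expansion. Let $H \subseteq \mathbb{R}^d$ be the set of representations $h = \phi(w_1,\dots,w_{i-1})$ of prefixes all of whose words lie in $\mathcal{V}^s$. The source model's next-word distribution is $p^s(j \mid h) = \exp(h^\top e_j^s)/\sum_{k \in \mathcal{V}^s}\exp(h^\top e_k^s)$ for $j \in \mathcal{V}^s$; the expanded model's is $p^t(j \mid h) = \exp(h^\top e_j)/\sum_{k \in \mathcal{V}^s \cup \mathcal{V}^t}\exp(h^\top e_k)$ for $j \in \mathcal{V}^s\cup\mathcal{V}^t$, where $e_j = e_j^s$ for $j \in \mathcal{V}^s$ and $e_j = e_j^t$ for $j \in \mathcal{V}^t$. Greedy decoding outputs the argmax. Tie-breaking convention: argmax uses a fixed ordering of $\mathcal{V}^s$ (the same in both models), and in the expanded model every word of $\mathcal{V}^s$ precedes every word of $\mathcal{V}^t$, ties being broken in favor of the earliest word. An initialization $\{e_k^t\}$ is called good if the two greedy outputs coincide for every $h \in H$. *)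

theory Defs
  imports "HOL-Analysis.Analysis"
begin

definition softmax_prob :: "'w set \<Rightarrow> ('w \<Rightarrow> real^'d) \<Rightarrow> real^'d \<Rightarrow> 'w \<Rightarrow> real" where
  "softmax_prob V e h j = exp (h \<bullet> e j) / (\<Sum>k\<in>V. exp (h \<bullet> e k))"

definition p_src :: "'w set \<Rightarrow> ('w \<Rightarrow> real^'d) \<Rightarrow> real^'d \<Rightarrow> 'w \<Rightarrow> real" where
  "p_src Vs es h j = softmax_prob Vs es h j"

definition comb_emb :: "'w set \<Rightarrow> ('w \<Rightarrow> real^'d) \<Rightarrow> ('w \<Rightarrow> real^'d) \<Rightarrow> 'w \<Rightarrow> real^'d" where
  "comb_emb Vs es et j = (if j \<in> Vs then es j else et j)"

definition p_tgt :: "'w set \<Rightarrow> 'w set \<Rightarrow> ('w \<Rightarrow> real^'d) \<Rightarrow> ('w \<Rightarrow> real^'d) \<Rightarrow> real^'d \<Rightarrow> 'w \<Rightarrow> real" where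
  "p_tgt Vs Vt es et h j = softmax_prob (Vs \<union> Vt) (comb_emb Vs es et) h j"

text \<open>Greedy decoding: the argmax of f over the words of the list xs (the list
  gives the fixed ordering of the vocabulary); ties are broken in favour of the
  earliest word of the list.\<close>
definition greedy :: "'w list \<Rightarrow> ('w \<Rightarrow> real) \<Rightarrow> 'w" where
  "greedy xs f = xs ! (LEAST i. i < length xs \<and> (\<forall>j<length xs. f (xs ! j) \<le> f (xs ! i)))"

definition prefix_reps :: "('w list \<Rightarrow> real^'d) \<Rightarrow> 'w set \<Rightarrow> (real^'d) set" where
  "prefix_reps \<phi> Vs = {\<phi> ws | ws. set ws \<subseteq> Vs}"

end

theory Submission
  imports Defs
begin

text \<open>Softmax is strictly increasing in the logit, so greedy decoding of either model is the
  greedy decoding of the logits h \<bullet> e j. Every added word has a logit bounded by some source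
  logit, and the source words come first in the ordering, so ties are resolved in favour of
  the source vocabulary: appending the new words never changes the first maximiser.\<close>

lemma greedy_cong:
  assumes "\<And>a b. a \<in> set xs \<Longrightarrow> b \<in> set xs \<Longrightarrow> f a \<le> f b \<longleftrightarrow> g a \<le> g b"
  shows "greedy xs f = greedy xs g"
proof -
  have "(\<lambda>i. i < length xs \<and> (\<forall>j<length xs. f (xs ! j) \<le> f (xs ! i)))
      = (\<lambda>i. i < length xs \<and> (\<forall>j<length xs. g (xs ! j) \<le> g (xs ! i)))"
    using assms by (auto intro!: ext simp: nth_mem)
  then show ?thesis unfolding greedy_def by simp
qed

lemma softmax_prob_le_iff:
  assumes "finite V" "V \<noteq> {}"
  shows "softmax_prob V e h a \<le> softmax_prob V e h b \<longleftrightarrow> h \<bullet> e a \<le> h \<bullet> e b"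
proof -
  have "(\<Sum>k\<in>V. exp (h \<bullet> e k)) > 0" using assms by (intro sum_pos) auto
  then show ?thesis unfolding softmax_prob_def by (simp add: divide_le_cancel)
qed

lemma greedy_softmax_prob:
  assumes "finite V" "V \<noteq> {}"
  shows "greedy xs (softmax_prob V e h) = greedy xs (\<lambda>j. h \<bullet> e j)"
  using assms by (intro greedy_cong) (simp add: softmax_prob_le_iff)

lemma ex_max_index:
  fixes f :: "'a \<Rightarrow> 'b::linorder"
  assumes "xs \<noteq> []"
  shows "\<exists>i<length xs. \<forall>j<length xs. f (xs ! j) \<le> f (xs ! i)"
proof -
  have "Max (f ` set xs) \<in> f ` set xs" using assms by (intro Max_in) auto
  then obtain i where "i < length xs" "f (xs ! i) = Max (f ` set xs)"
    by (auto simp: in_set_conv_nth)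
  then show ?thesis by (auto simp: nth_mem)
qed

lemma greedy_append_dominated:
  fixes f :: "'a \<Rightarrow> real"
  assumes "xs \<noteq> []"
    and dominated: "\<And>y. y \<in> set ys \<Longrightarrow> \<exists>x\<in>set xs. f y \<le> f x"
  shows "greedy (xs @ ys) f = greedy xs f"
proof -
  let ?P = "\<lambda>zs i. i < length zs \<and> (\<forall>j<length zs. f (zs ! j) \<le> f (zs ! i))"
  define i0 where "i0 = (LEAST i. ?P xs i)"
  have "?P xs i0"
    unfolding i0_def using ex_max_index[OF \<open>xs \<noteq> []\<close>] by (rule LeastI_ex)
  then have max_i0: "f x \<le> f (xs ! i0)" if "x \<in> set xs" for x
    using that by (auto simp: in_set_conv_nth)
  have "(LEAST i. ?P (xs @ ys) i) = i0"
  proof (rule Least_equality)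
    show "?P (xs @ ys) i0"
    proof (intro conjI allI impI)
      fix j assume "j < length (xs @ ys)"
      then have "(xs @ ys) ! j \<in> set xs \<or> (xs @ ys) ! j \<in> set ys"
        by (auto simp: nth_append)
      moreover have "(xs @ ys) ! i0 = xs ! i0"
        using \<open>?P xs i0\<close> by (simp add: nth_append)
      ultimately show "f ((xs @ ys) ! j) \<le> f ((xs @ ys) ! i0)"
        using max_i0 dominated by fastforce
    qed (use \<open>?P xs i0\<close> in simp)
    show "i0 \<le> i" if "?P (xs @ ys) i" for i
    proof (rule ccontr)
      assume "\<not> i0 \<le> i"
      with \<open>?P xs i0\<close> have "i < length xs" by simp
      moreover have "f (xs ! j) \<le> f (xs ! i)" if "j < length xs" for j
        using \<open>?P (xs @ ys) i\<close> \<open>i < length xs\<close> that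
        by (metis length_append nth_append_left trans_less_add1)
      ultimately have "?P xs i" by blast
      then show False using \<open>\<not> i0 \<le> i\<close> unfolding i0_def by (simp add: Least_le)
    qed
  qed
  then have "greedy (xs @ ys) f = (xs @ ys) ! i0" unfolding greedy_def by simp
  also have "\<dots> = xs ! i0" using \<open>?P xs i0\<close> by (simp add: nth_append)
  also have "\<dots> = greedy xs f" unfolding greedy_def i0_def ..
  finally show ?thesis .
qed

theorem theorem1:
  fixes Vs Vt :: "'w set"
    and es et :: "'w \<Rightarrow> real^'d"
    and \<phi> :: "'w list \<Rightarrow> real^'d"
    and ls lt :: "'w list"
  assumes "finite Vs" and "Vs \<noteq> {}" and "finite Vt" and "Vs \<inter> Vt = {}"
    and "distinct ls" and "set ls = Vs"
    and "distinct lt" and "set lt = Vt"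
    and "\<forall>h::real^'d. \<forall>k\<in>Vt. h \<bullet> et k \<le> Max ((\<lambda>k. h \<bullet> es k) ` Vs)"
  shows "\<forall>h\<in>prefix_reps \<phi> Vs.
           greedy ls (p_src Vs es h) = greedy (ls @ lt) (p_tgt Vs Vt es et h)"
proof
  fix h
  define logit where "logit = (\<lambda>j. h \<bullet> comb_emb Vs es et j)"
  have dominated: "\<exists>k\<in>set ls. logit j \<le> logit k" if "j \<in> set lt" for j
  proof (cases "j \<in> Vs")
    case False
    with that assms(8,9) have "h \<bullet> et j \<le> Max ((\<lambda>k. h \<bullet> es k) ` Vs)" by blast
    with False assms(1,2,6) show ?thesis by (simp add: Max_ge_iff logit_def comb_emb_def)
  qed (use assms(6) in auto)
  have "greedy ls (p_src Vs es h) = greedy ls logit"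
    unfolding p_src_def greedy_softmax_prob[OF assms(1,2)]
    using assms(6) by (intro greedy_cong) (simp add: logit_def comb_emb_def)
  also have "\<dots> = greedy (ls @ lt) logit"
    using assms(2,6) dominated by (intro greedy_append_dominated[symmetric]) auto
  also have "\<dots> = greedy (ls @ lt) (p_tgt Vs Vt es et h)"
    unfolding p_tgt_def logit_def using assms(1,2,3)
    by (intro greedy_softmax_prob[symmetric]) auto
  finally show "greedy ls (p_src Vs es h) = greedy (ls @ lt) (p_tgt Vs Vt es et h)" .
qed

end
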